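(* Fix $\epsilon \in (0,0.1)$. Let $G_0\subset\mathbb{R}^2$ be the unit grid (union of the lines $x_1=k$, $x_2=k$, $k\in\mathbb{Z}$), $B(\epsilon)$ the Euclidean $\epsilon$-neighbourhood of $\mathbb{Z}^2$, and $G_\epsilon = (G_0 \setminus B(\epsilon)) \cup \partial B(\epsilon)$. Put $P_1=(0,-\epsilon)$, $P_2=(0,1-\epsilon)$, $P_3=(1,-\epsilon)$, $E_1=(-\epsilon,0)$, $E_2=(1-\epsilon,0)$, $L=(\epsilon,0)$, $M=(0,\epsilon)$. Consider the following paths in $G_\epsilon$: $a$ goes from $P_1$ along the circle $|x|=\epsilon$ through $E_1$ to $M$ (clockwise), then along the vertical grid segment to $P_2$; $b$ goes from $P_1$ along the circle $|x|=\epsilon$ to $L$ (counterclockwise quarter arc), then along the horizontal grid segment to $E_2$, then along the circle $|x-(1,0)|=\epsilon$ (clockwise quarter arc) to $P_3$; $c$ is the loop from $P_1$ once counterclockwise around the circle $|x|=\epsilon$ through $L, M, E_1$ back to $P_1$. Their projections to $G_\epsilon/\mathbb{Z}^2$ are loops generating $\pi_1(G_\epsilon/\mathbb{Z}^2, P_1)$, identified with the free group $\mathbb{F}_3=\langle a,b,c\rangle$. Let $r = aba^{-1}b^{-1}c$ and let $N$ be its normal closure in $\mathbb{F}_3$. For $w \in N$, let $\gamma'(w)$ be the closed curve in $G_\epsilon$ starting at $P_1$ obtained by lifting the loop $w$, and let $\gamma(w)$ be a geometrically irreducible cycle in $G_\epsilon$ freely homotopic in $G_\epsilon$ to $\gamma'(w)$.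 Then for every cyclically reduced word $w \in N$, $$l(w) \leq (1-2\epsilon)^{-1}\,\mathrm{Length}(\gamma(w)),$$ where $l(w)$ is the number of occurrences of the letters $a^{\pm1}, b^{\pm1}$ in $w$ and $\mathrm{Length}$ is Euclidean length.
   Context: A 1-cycle on $G_\epsilon$ is geometrically irreducible if it has no pair of consecutive edges which coincide but have opposite orientations. Elements of $N$ lie in the kernel of the homomorphism $\mathbb{F}_3\to\mathbb{Z}^2$ sending $a\mapsto(0,1)$, $b\mapsto(1,0)$, $c\mapsto 0$, so their lifts to $G_\epsilon$ are closed. *)

theory Defs
  imports Complex_Main
begin

section \<open>The graph G_eps (combinatorial model)\<close>

text \<open>Vertices of G_eps: the points p + eps*(direction) on the circle of radius eps around
a lattice point p, where the direction is right (R), up (U), left (Lf) or down (D).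
E.g. P1 = ((0,0),D), L = ((0,0),R), M = ((0,0),U), E1 = ((0,0),Lf).\<close>

datatype dir = R | U | Lf | D

fun ccw :: "dir \<Rightarrow> dir" where
  "ccw R = U" | "ccw U = Lf" | "ccw Lf = D" | "ccw D = R"

type_synonym pt = "int \<times> int"
type_synonym vert = "pt \<times> dir"

definition padd :: "pt \<Rightarrow> pt \<Rightarrow> pt" where
  "padd p q = (fst p + fst q, snd p + snd q)"

definition psub :: "pt \<Rightarrow> pt \<Rightarrow> pt" where
  "psub p q = (fst p - fst q, snd p - snd q)"

text \<open>Edges of G_eps:
  Arc p d  : the quarter arc of the circle |x - p| = eps from vertex (p,d) counterclockwise to (p, ccw d);
  HSeg p   : the horizontal grid segment from (p,R) to (p+(1,0),Lf);
  VSeg p   : the vertical grid segment from (p,U) to (p+(0,1),D).\<close>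

datatype edge = Arc pt dir | HSeg pt | VSeg pt

fun esrc :: "edge \<Rightarrow> vert" where
  "esrc (Arc p d) = (p, d)"
| "esrc (HSeg p) = (p, R)"
| "esrc (VSeg p) = (p, U)"

fun etgt :: "edge \<Rightarrow> vert" where
  "etgt (Arc p d) = (p, ccw d)"
| "etgt (HSeg p) = (padd p (1,0), Lf)"
| "etgt (VSeg p) = (padd p (0,1), D)"

fun elen :: "real \<Rightarrow> edge \<Rightarrow> real" where
  "elen eps (Arc p d) = eps * pi / 2"
| "elen eps (HSeg p) = 1 - 2 * eps"
| "elen eps (VSeg p) = 1 - 2 * eps"

fun etrans :: "pt \<Rightarrow> edge \<Rightarrow> edge" where
  "etrans v (Arc p d) = Arc (padd v p) d"
| "etrans v (HSeg p) = HSeg (padd v p)"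
| "etrans v (VSeg p) = VSeg (padd v p)"

text \<open>Oriented edges: True = standard orientation (esrc to etgt), False = reversed.\<close>
type_synonym dedge = "edge \<times> bool"

definition dtail :: "dedge \<Rightarrow> vert" where
  "dtail e = (if snd e then esrc (fst e) else etgt (fst e))"

definition dhead :: "dedge \<Rightarrow> vert" where
  "dhead e = (if snd e then etgt (fst e) else esrc (fst e))"

definition flip :: "dedge \<Rightarrow> dedge" where
  "flip e = (fst e, \<not> snd e)"

definition inv_path :: "dedge list \<Rightarrow> dedge list" where
  "inv_path xs = rev (map flip xs)"

definition trans_path :: "pt \<Rightarrow> dedge list \<Rightarrow> dedge list" where
  "trans_path v xs = map (\<lambda>(e, b). (etrans v e, b)) xs"

definition closed_edge_path :: "dedge list \<Rightarrow> bool" where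
  "closed_edge_path xs \<longleftrightarrow>
     (\<forall>i. Suc i < length xs \<longrightarrow> dhead (xs ! i) = dtail (xs ! Suc i)) \<and>
     (xs \<noteq> [] \<longrightarrow> dhead (last xs) = dtail (hd xs))"

definition geom_irreducible :: "dedge list \<Rightarrow> bool" where
  "geom_irreducible xs \<longleftrightarrow>
     (\<forall>i. Suc i < length xs \<longrightarrow> xs ! Suc i \<noteq> flip (xs ! i)) \<and>
     (xs \<noteq> [] \<longrightarrow> hd xs \<noteq> flip (last xs))"

definition path_len :: "real \<Rightarrow> dedge list \<Rightarrow> real" where
  "path_len eps xs = (\<Sum>e\<leftarrow>xs. elen eps (fst e))"

inductive fh_step :: "dedge list \<Rightarrow> dedge list \<Rightarrow> bool" where
  rotate: "closed_edge_path (xs @ ys) \<Longrightarrow> fh_step (xs @ ys) (ys @ xs)"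
| backtrack: "closed_edge_path (xs @ ys) \<Longrightarrow> closed_edge_path (xs @ [e, flip e] @ ys) \<Longrightarrow>
     fh_step (xs @ ys) (xs @ [e, flip e] @ ys)"

definition freely_homotopic :: "dedge list \<Rightarrow> dedge list \<Rightarrow> bool" where
  "freely_homotopic p q \<longleftrightarrow> closed_edge_path p \<and> closed_edge_path q \<and>
     (\<lambda>x y. fh_step x y \<or> fh_step y x)\<^sup>*\<^sup>* p q"

section \<open>The free group F_3 = <a,b,c> as reduced words\<close>

datatype gen = A | B | C

type_synonym letter = "gen \<times> bool"   \<comment> \<open>True: g, False: g^{-1}\<close>

definition inv_letter :: "letter \<Rightarrow> letter" where
  "inv_letter x = (fst x, \<not> snd x)"

definition inv_word :: "letter list \<Rightarrow> letter list" where
  "inv_word w = rev (map inv_letter w)"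

fun red :: "letter list \<Rightarrow> letter list" where
  "red [] = []"
| "red (x # xs) = (case red xs of [] \<Rightarrow> [x] | y # ys \<Rightarrow> if y = inv_letter x then ys else x # y # ys)"

definition reduced :: "letter list \<Rightarrow> bool" where
  "reduced w \<longleftrightarrow> (\<forall>i. Suc i < length w \<longrightarrow> w ! Suc i \<noteq> inv_letter (w ! i))"

definition cyc_reduced :: "letter list \<Rightarrow> bool" where
  "cyc_reduced w \<longleftrightarrow> reduced w \<and> (w \<noteq> [] \<longrightarrow> hd w \<noteq> inv_letter (last w))"

definition rel_r :: "letter list" where
  "rel_r = [(A, True), (B, True), (A, False), (B, False), (C, True)]"

definition N :: "letter list set" where
  "N = { red (concat (map (\<lambda>(u, s). u @ (if s then rel_r else inv_word rel_r) @ inv_word u) cs))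
         | cs. True }"

definition ell :: "letter list \<Rightarrow> nat" where
  "ell w = length (filter (\<lambda>x. fst x \<noteq> C) w)"

fun gen_path :: "gen \<Rightarrow> dedge list" where
  "gen_path A = [(Arc (0,0) Lf, False), (Arc (0,0) U, False), (VSeg (0,0), True)]"
| "gen_path B = [(Arc (0,0) D, True), (HSeg (0,0), True), (Arc (1,0) Lf, True)]"
| "gen_path C = [(Arc (0,0) D, True), (Arc (0,0) R, True), (Arc (0,0) U, True), (Arc (0,0) Lf, True)]"

fun disp :: "gen \<Rightarrow> pt" where
  "disp A = (0, 1)" | "disp B = (1, 0)" | "disp C = (0, 0)"

fun lift_from :: "pt \<Rightarrow> letter list \<Rightarrow> dedge list" where
  "lift_from p [] = []"
| "lift_from p (x # w) =
     (if snd x then trans_path p (gen_path (fst x)) @ lift_from (padd p (disp (fst x))) w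
      else trans_path (psub p (disp (fst x))) (inv_path (gen_path (fst x)))
             @ lift_from (psub p (disp (fst x))) w)"

definition lift :: "letter list \<Rightarrow> dedge list" where
  "lift w = lift_from (0, 0) w"

end

(* Cancelling backtracks is confluent up to rotation, so all closed edge paths in a free
   homotopy class share, up to rotation, one cyclic normal form, and the geometrically
   irreducible gamma is it. We follow the cancellations starting from the lift of w. In that
   lift no grid segment is ever followed, after arcs of total turning zero, by the same segment
   reversed: the two segments would belong to letters a^(+-1), b^(+-1) separated by a power
   c^k, the zero turning forces k = 0, and then the letters would be mutually inverse,
   contradicting cyclic reducedness. So only arcs get cancelled, and the normal form keeps one
   grid segment of length 1 - 2 eps per letter a^(+-1), b^(+-1) of w. *)

theory Submission
  imports Defs
begin

section \<open>Cyclic cancellation up to rotation\<close>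

definition rotation_equiv :: "'a list \<Rightarrow> 'a list \<Rightarrow> bool" where
  "rotation_equiv xs ys \<longleftrightarrow> (\<exists>k. ys = rotate k xs)"

lemma rotation_equiv_refl [simp]: "rotation_equiv xs xs"
  unfolding rotation_equiv_def by (metis rotate0 id_apply)

lemma rotation_equiv_trans: "rotation_equiv xs ys \<Longrightarrow> rotation_equiv ys zs \<Longrightarrow> rotation_equiv xs zs"
  unfolding rotation_equiv_def by (metis rotate_rotate)

lemma rotation_equiv_append_swap: "rotation_equiv (xs @ ys) (ys @ xs)"
  unfolding rotation_equiv_def by (metis rotate_append)

lemma rotation_equiv_sym: "rotation_equiv xs ys \<Longrightarrow> rotation_equiv ys xs"
  unfolding rotation_equiv_def
  by (metis rotate_drop_take rotate_append append_take_drop_id)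

locale involution =
  fixes \<iota> :: "'a \<Rightarrow> 'a"
  assumes involutive [simp]: "\<iota> (\<iota> x) = x"
begin

definition cancel_step :: "'a list \<Rightarrow> 'a list \<Rightarrow> bool" where
  "cancel_step xs ys \<longleftrightarrow> (\<exists>k x. rotate k xs = x # \<iota> x # ys)"

definition cyclically_reduced :: "'a list \<Rightarrow> bool" where
  "cyclically_reduced xs \<longleftrightarrow> (\<nexists>ys. cancel_step xs ys)"

lemma cancel_step_length: "cancel_step xs ys \<Longrightarrow> length ys < length xs"
  unfolding cancel_step_def by (metis length_Cons length_rotate lessI less_SucI)

lemma cancel_step_append: "cancel_step (xs @ [x, \<iota> x] @ ys) (ys @ xs)"
  unfolding cancel_step_def by (metis append_Cons append_Nil rotate_append)

lemma cancel_step_rotation_equiv: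
  assumes "rotation_equiv xs xs'" and "cancel_step xs ys"
  shows "cancel_step xs' ys"
proof -
  obtain j where "xs = rotate j xs'"
    using rotation_equiv_sym[OF assms(1)] rotation_equiv_def by auto
  with assms(2) show ?thesis
    unfolding cancel_step_def by (metis rotate_rotate)
qed

lemma cyclically_reduced_rotation_equiv:
  "rotation_equiv xs xs' \<Longrightarrow> cyclically_reduced xs \<Longrightarrow> cyclically_reduced xs'"
  unfolding cyclically_reduced_def by (metis cancel_step_rotation_equiv rotation_equiv_sym)

lemma cancel_steps_rotation_equiv:
  assumes "cancel_step\<^sup>*\<^sup>* xs ys" and "rotation_equiv xs xs'"
  obtains ys' where "cancel_step\<^sup>*\<^sup>* xs' ys'" and "rotation_equiv ys ys'"
  using assms(1)
proof (cases rule: converse_rtranclpE)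
  case base
  with assms(2) that show ?thesis by blast
next
  case (step zs)
  with assms(2) that show ?thesis
    by (meson cancel_step_rotation_equiv converse_rtranclp_into_rtranclp rotation_equiv_refl)
qed

lemma cyclic_normal_form_exists:
  obtains ys where "cancel_step\<^sup>*\<^sup>* xs ys" and "cyclically_reduced ys"
proof (induction "length xs" arbitrary: xs thesis rule: less_induct)
  case less
  show ?case
  proof (cases "cyclically_reduced xs")
    case False
    then obtain xs' where step: "cancel_step xs xs'"
      unfolding cyclically_reduced_def by blast
    obtain ys where "cancel_step\<^sup>*\<^sup>* xs' ys" "cyclically_reduced ys"
      using less.hyps[OF cancel_step_length[OF step]] by blast
    with step less.prems show ?thesis by (meson converse_rtranclp_into_rtranclp)
  qed (use less.prems in blast)
qed

lemma cancel_steps_of_swapped_splittings: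
  assumes zs: "us @ vs = z # \<iota> z # zs" and ys: "vs @ us = y # \<iota> y # ys"
  shows "rotation_equiv ys zs \<or> (\<exists>ys' zs'. cancel_step ys ys' \<and> cancel_step zs zs' \<and> rotation_equiv ys' zs')"
proof -
  consider "us = []" | "vs = []" | (us_single) u where "us = [u]" | (vs_single) v where "vs = [v]"
    | (both_long) u1 u2 us' v1 v2 vs' where "us = u1 # u2 # us'" "vs = v1 # v2 # vs'"
    by (metis list.exhaust)
  then show ?thesis
  proof cases
    case us_single
    with ys zs have "zs @ [z] = z # ys" by auto
    then have "rotation_equiv zs ys"
      by (cases zs) (auto intro: rotation_equiv_append_swap[of "[z]", simplified])
    then show ?thesis using rotation_equiv_sym by blast
  next
    case vs_single
    with ys zs have "ys @ [y] = y # zs" by auto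
    then have "rotation_equiv ys zs"
      by (cases ys) (auto intro: rotation_equiv_append_swap[of "[y]", simplified])
    then show ?thesis by blast
  next
    case both_long
    with ys zs have "ys = vs' @ [z, \<iota> z] @ us'" and "zs = us' @ [y, \<iota> y] @ vs'"
      by auto
    then show ?thesis
      using cancel_step_append rotation_equiv_append_swap by metis
  qed (use ys zs in auto)
qed

lemma cancel_step_local_confluence:
  assumes "cancel_step xs ys" and "cancel_step xs zs"
  shows "rotation_equiv ys zs \<or> (\<exists>ys' zs'. cancel_step ys ys' \<and> cancel_step zs zs' \<and> rotation_equiv ys' zs')"
proof -
  obtain k y where ys: "rotate k xs = y # \<iota> y # ys"
    using assms(1) cancel_step_def by auto
  obtain j z where zs: "rotate j xs = z # \<iota> z # zs"
    using assms(2) cancel_step_def by auto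
  define t where "t = rotate j xs"
  obtain i where "xs = rotate i t"
    using rotation_equiv_sym unfolding rotation_equiv_def t_def by blast
  define m where "m = (k + i) mod length t"
  have "drop m t @ take m t = rotate (k + i) t"
    unfolding m_def by (rule rotate_drop_take[symmetric])
  also have "\<dots> = y # \<iota> y # ys"
    using ys \<open>xs = rotate i t\<close> by (simp add: rotate_rotate)
  finally have "drop m t @ take m t = y # \<iota> y # ys" .
  moreover have "take m t @ drop m t = z # \<iota> z # zs"
    using zs t_def by simp
  ultimately show ?thesis
    using cancel_steps_of_swapped_splittings by blast
qed

lemma cancel_steps_from_cyclically_reduced:
  "cancel_step\<^sup>*\<^sup>* xs ys \<Longrightarrow> cyclically_reduced xs \<Longrightarrow> ys = xs"
  unfolding cyclically_reduced_def by (metis converse_rtranclpE)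

text \<open>Newman's lemma, up to rotation.\<close>
lemma cyclic_normal_forms_unique:
  assumes "rotation_equiv xs xs'"
    and "cancel_step\<^sup>*\<^sup>* xs ys" and "cyclically_reduced ys"
    and "cancel_step\<^sup>*\<^sup>* xs' zs" and "cyclically_reduced zs"
  shows "rotation_equiv ys zs"
  using assms
proof (induction "length xs" arbitrary: xs xs' ys zs rule: less_induct)
  case less
  obtain zs' where zs': "cancel_step\<^sup>*\<^sup>* xs zs'" "rotation_equiv zs zs'"
    using cancel_steps_rotation_equiv[OF less.prems(4) rotation_equiv_sym[OF less.prems(1)]] .
  have "cyclically_reduced zs'"
    using cyclically_reduced_rotation_equiv[OF zs'(2) less.prems(5)] .
  have "rotation_equiv ys zs'"
  proof (cases "cyclically_reduced xs")
    case True
    then show ?thesis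
      using cancel_steps_from_cyclically_reduced less.prems(2) zs'(1)
      by (metis rotation_equiv_refl)
  next
    case False
    then obtain l1 l2 where l1: "cancel_step xs l1" "cancel_step\<^sup>*\<^sup>* l1 ys"
      and l2: "cancel_step xs l2" "cancel_step\<^sup>*\<^sup>* l2 zs'"
      using less.prems(2,3) zs'(1) \<open>cyclically_reduced zs'\<close>
      by (metis converse_rtranclpE)
    note IH1 = less.hyps[OF cancel_step_length[OF l1(1)]]
      and IH2 = less.hyps[OF cancel_step_length[OF l2(1)]]
    from cancel_step_local_confluence[OF l1(1) l2(1)] show ?thesis
    proof
      assume "rotation_equiv l1 l2"
      then show ?thesis
        using IH1 l1(2) l2(2) less.prems(3) \<open>cyclically_reduced zs'\<close> by blast
    next
      assume "\<exists>l3 l4. cancel_step l1 l3 \<and> cancel_step l2 l4 \<and> rotation_equiv l3 l4"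
      then obtain l3 l4 where l34: "cancel_step l1 l3" "cancel_step l2 l4" "rotation_equiv l3 l4"
        by blast
      obtain n3 where n3: "cancel_step\<^sup>*\<^sup>* l3 n3" "cyclically_reduced n3"
        using cyclic_normal_form_exists .
      obtain n4 where n4: "cancel_step\<^sup>*\<^sup>* l4 n4" "cyclically_reduced n4"
        using cyclic_normal_form_exists .
      have "rotation_equiv ys n3"
        using IH1[OF rotation_equiv_refl l1(2) less.prems(3)] l34(1) n3
        by (meson converse_rtranclp_into_rtranclp)
      moreover have "rotation_equiv n3 n4"
        using less.hyps[of l3] cancel_step_length l1(1) l34(1,3) n3 n4
        by (meson less_trans)
      moreover have "rotation_equiv n4 zs'"
        using IH2[OF rotation_equiv_refl _ n4(2) l2(2) \<open>cyclically_reduced zs'\<close>] l34(2) n4(1)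
        by (meson converse_rtranclp_into_rtranclp)
      ultimately show ?thesis
        using rotation_equiv_trans by blast
    qed
  qed
  then show ?case
    using zs'(2) rotation_equiv_sym rotation_equiv_trans by blast
qed

end

section \<open>Free homotopy classes of closed edge paths\<close>

lemma flip_flip [simp]: "flip (flip e) = e"
  by (simp add: flip_def)

interpretation edge_path: involution flip
  by unfold_locales simp

lemma fh_step_cyclic_normal_forms:
  assumes "fh_step xs ys"
    and "edge_path.cancel_step\<^sup>*\<^sup>* xs xs'" and "edge_path.cyclically_reduced xs'"
    and "edge_path.cancel_step\<^sup>*\<^sup>* ys ys'" and "edge_path.cyclically_reduced ys'"
  shows "rotation_equiv xs' ys'"
  using assms(1)
proof cases
  case rotate
  with assms(2-) show ?thesis
    using edge_path.cyclic_normal_forms_unique rotation_equiv_append_swap by blast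
next
  case (backtrack us vs e)
  obtain n where n: "edge_path.cancel_step\<^sup>*\<^sup>* (vs @ us) n" "edge_path.cyclically_reduced n"
    using edge_path.cyclic_normal_form_exists .
  have "rotation_equiv xs' n"
    using edge_path.cyclic_normal_forms_unique[OF rotation_equiv_append_swap] backtrack assms(2,3) n
    by blast
  moreover have "edge_path.cancel_step\<^sup>*\<^sup>* ys n"
    using backtrack edge_path.cancel_step_append n(1)
    by (metis converse_rtranclp_into_rtranclp)
  then have "rotation_equiv n ys'"
    using edge_path.cyclic_normal_forms_unique[OF rotation_equiv_refl] n(2) assms(4,5) by blast
  ultimately show ?thesis
    using rotation_equiv_trans by blast
qed

lemma free_homotopy_cyclic_normal_form:
  assumes "(\<lambda>x y. fh_step x y \<or> fh_step y x)\<^sup>*\<^sup>* \<gamma> xs" and "edge_path.cyclically_reduced \<gamma>"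
  shows "\<exists>n. edge_path.cancel_step\<^sup>*\<^sup>* xs n \<and> rotation_equiv n \<gamma>"
  using assms(1)
proof (induction rule: rtranclp_induct)
  case (step xs ys)
  then obtain n where n: "edge_path.cancel_step\<^sup>*\<^sup>* xs n" "rotation_equiv n \<gamma>"
    by blast
  have "edge_path.cyclically_reduced n"
    using edge_path.cyclically_reduced_rotation_equiv[OF rotation_equiv_sym[OF n(2)] assms(2)] .
  obtain n' where n': "edge_path.cancel_step\<^sup>*\<^sup>* ys n'" "edge_path.cyclically_reduced n'"
    using edge_path.cyclic_normal_form_exists .
  have "rotation_equiv n' n"
    using step.hyps(2) fh_step_cyclic_normal_forms n(1) n' \<open>edge_path.cyclically_reduced n\<close>
      rotation_equiv_sym by blast
  with n(2) n'(1) show ?case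
    using rotation_equiv_trans by blast
qed auto

lemma geom_irreducible_cyclically_reduced:
  assumes "geom_irreducible xs"
  shows "edge_path.cyclically_reduced xs"
  unfolding edge_path.cyclically_reduced_def edge_path.cancel_step_def
proof clarify
  fix ys k e
  assume rot: "rotate k xs = e # flip e # ys"
  define n where "n = length xs"
  define i where "i = k mod n"
  have "n \<ge> 2"
    using arg_cong[OF rot, of length] n_def by simp
  then have "i < n"
    unfolding i_def by simp
  have e: "xs ! i = e"
    using nth_rotate[of 0 xs k] rot \<open>n \<ge> 2\<close> n_def i_def by force
  have flip_e: "xs ! (Suc i mod n) = flip e"
    using nth_rotate[of 1 xs k] rot \<open>n \<ge> 2\<close> n_def i_def by (simp add: mod_Suc_eq)
  show False
  proof (cases "Suc i < n")
    case True
    then show False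
      using assms e flip_e n_def unfolding geom_irreducible_def by auto
  next
    case False
    with \<open>i < n\<close> have "Suc i = n" by simp
    then have "i = n - 1" and "Suc i mod n = 0" by auto
    moreover have "xs \<noteq> []"
      using \<open>n \<ge> 2\<close> n_def by auto
    ultimately have "last xs = e" and "hd xs = flip e"
      using e flip_e n_def by (simp_all add: last_conv_nth hd_conv_nth)
    then show False
      using assms \<open>n \<ge> 2\<close> n_def unfolding geom_irreducible_def by auto
  qed
qed

section \<open>Segment spurs\<close>

definition is_segment :: "dedge \<Rightarrow> bool" where
  "is_segment e \<longleftrightarrow> (case fst e of Arc _ _ \<Rightarrow> False | _ \<Rightarrow> True)"

definition segment_count :: "dedge list \<Rightarrow> nat" where
  "segment_count xs = length (filter is_segment xs)"

text \<open>Quarter turns of an arc, counterclockwise positive (junk on segments).\<close>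
definition turn :: "dedge \<Rightarrow> int" where
  "turn e = (if snd e then 1 else -1)"

text \<open>A segment traversed forth and back around a null-homotopic run of arcs: cancelling arc
  backtracks can turn it into an honest backtrack of the segment.\<close>
definition segment_spur :: "dedge list \<Rightarrow> bool" where
  "segment_spur xs \<longleftrightarrow> (\<exists>us s ms vs. xs = us @ [s] @ ms @ [flip s] @ vs \<and> is_segment s \<and>
     (\<forall>m \<in> set ms. \<not> is_segment m) \<and> sum_list (map turn ms) = 0)"

definition cyclically_spur_free :: "dedge list \<Rightarrow> bool" where
  "cyclically_spur_free xs \<longleftrightarrow> (\<forall>k. \<not> segment_spur (rotate k xs))"

lemma is_segment_flip [simp]: "is_segment (flip e) = is_segment e"
  by (simp add: is_segment_def flip_def)

lemma turn_flip [simp]: "turn (flip e) = - turn e"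
  by (simp add: turn_def flip_def)

lemma segment_count_append [simp]:
  "segment_count (xs @ ys) = segment_count xs + segment_count ys"
  by (simp add: segment_count_def)

lemma segment_count_rotation_equiv:
  "rotation_equiv xs ys \<Longrightarrow> segment_count ys = segment_count xs"
  unfolding rotation_equiv_def
  by (metis rotate_drop_take segment_count_append add.commute append_take_drop_id)

lemma cyclically_spur_free_rotation_equiv:
  "cyclically_spur_free xs \<Longrightarrow> rotation_equiv xs ys \<Longrightarrow> \<not> segment_spur ys"
  unfolding cyclically_spur_free_def rotation_equiv_def by blast

lemma segment_spur_insert_arc_backtrack:
  assumes "segment_spur (xs @ ys)" and "\<not> is_segment e"
  shows "segment_spur (xs @ [e, flip e] @ ys)"
proof -
  obtain us s ms vs where split: "xs @ ys = us @ [s] @ ms @ [flip s] @ vs" and "is_segment s"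
    and arcs: "\<forall>m \<in> set ms. \<not> is_segment m" and turns: "sum_list (map turn ms) = 0"
    using assms(1) segment_spur_def by auto
  define n where "n = length xs"
  have xs: "xs = take n (us @ [s] @ ms @ [flip s] @ vs)"
    and ys: "ys = drop n (us @ [s] @ ms @ [flip s] @ vs)"
    using split n_def by (metis append_eq_conv_conj)+
  have spur_in: "segment_spur (us' @ [s] @ ms' @ [flip s] @ vs')"
    if "\<forall>m \<in> set ms'. \<not> is_segment m" and "sum_list (map turn ms') = 0" for us' ms' vs'
    unfolding segment_spur_def using that \<open>is_segment s\<close> by blast
  consider (before) "n \<le> length us" | (inside) j where "n = length us + 1 + j" "j \<le> length ms"
    | (after) j where "n = length us + length ms + 2 + j"
  proof -
    consider "n \<le> length us" | "length us < n" "n \<le> length us + 1 + length ms"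
      | "length us + 1 + length ms < n" by linarith
    then show ?thesis
      by cases (use that in \<open>auto dest!: less_imp_Suc_add simp: le_iff_add\<close>)
  qed
  then show ?thesis
  proof cases
    case before
    then have "xs @ [e, flip e] @ ys = (take n us @ [e, flip e] @ drop n us) @ [s] @ ms @ [flip s] @ vs"
      by (simp add: xs ys)
    then show ?thesis using spur_in arcs turns by metis
  next
    case (inside j)
    then have "xs @ [e, flip e] @ ys = us @ [s] @ (take j ms @ [e, flip e] @ drop j ms) @ [flip s] @ vs"
      by (simp add: xs ys)
    moreover have "\<forall>m \<in> set (take j ms @ [e, flip e] @ drop j ms). \<not> is_segment m"
      using arcs assms(2) by (auto dest: in_set_takeD in_set_dropD)
    moreover have "sum_list (map turn (take j ms @ [e, flip e] @ drop j ms)) = 0"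
      using turns by simp (metis append_take_drop_id map_append sum_list_append)
    ultimately show ?thesis using spur_in by metis
  next
    case (after j)
    then have "xs @ [e, flip e] @ ys = us @ [s] @ ms @ [flip s] @ (take j vs @ [e, flip e] @ drop j vs)"
      by (simp add: xs ys)
    then show ?thesis using spur_in arcs turns by metis
  qed
qed

lemma cancel_step_cyclically_spur_free:
  assumes "cyclically_spur_free xs" and "edge_path.cancel_step xs ys"
  shows "cyclically_spur_free ys \<and> segment_count ys = segment_count xs"
proof -
  obtain k e where rot: "rotate k xs = e # flip e # ys"
    using assms(2) edge_path.cancel_step_def by auto
  have "rotation_equiv xs (rotate k xs)"
    unfolding rotation_equiv_def by blast
  have arc: "\<not> is_segment e"
  proof
    assume "is_segment e"
    moreover have "rotate k xs = [] @ [e] @ [] @ [flip e] @ ys"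
      by (simp add: rot)
    ultimately have "segment_spur (rotate k xs)"
      unfolding segment_spur_def by fastforce
    with assms(1) show False
      unfolding cyclically_spur_free_def by blast
  qed
  have "\<not> segment_spur (rotate j ys)" for j
  proof -
    define m where "m = j mod length ys"
    have "rotation_equiv (rotate k xs) (drop m ys @ [e, flip e] @ take m ys)"
      unfolding rot using rotation_equiv_append_swap[of "[e, flip e] @ take m ys" "drop m ys"]
      by simp
    then have "\<not> segment_spur (drop m ys @ [e, flip e] @ take m ys)"
      using assms(1) \<open>rotation_equiv xs (rotate k xs)\<close>
      by (meson cyclically_spur_free_rotation_equiv rotation_equiv_trans)
    then show ?thesis
      unfolding m_def rotate_drop_take[of j ys]
      using segment_spur_insert_arc_backtrack arc by blast
  qed
  moreover have "segment_count ys = segment_count xs"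
    using segment_count_rotation_equiv[OF \<open>rotation_equiv xs (rotate k xs)\<close>] arc
    by (simp add: rot segment_count_def)
  ultimately show ?thesis
    unfolding cyclically_spur_free_def by blast
qed

lemma cancel_steps_cyclically_spur_free:
  "edge_path.cancel_step\<^sup>*\<^sup>* xs ys \<Longrightarrow> cyclically_spur_free xs \<Longrightarrow>
    cyclically_spur_free ys \<and> segment_count ys = segment_count xs"
  by (induction rule: rtranclp_induct) (use cancel_step_cyclically_spur_free in auto)

lemma path_len_ge_segment_count:
  fixes eps :: real
  assumes "0 < eps"
  shows "(1 - 2 * eps) * real (segment_count xs) \<le> path_len eps xs"
proof (induction xs)
  case (Cons e xs)
  have "(if is_segment e then 1 - 2 * eps else 0) \<le> elen eps (fst e)"
    using assms by (cases "fst e") (auto simp: is_segment_def)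
  with Cons show ?case
    by (auto simp: segment_count_def path_len_def algebra_simps)
qed (simp add: segment_count_def path_len_def)

text \<open>Reads a path from left to right, remembering the last segment and the turning of the arcs
  since; it fails exactly at the end of a segment spur.\<close>
fun spur_scan :: "(dedge \<times> int) option \<Rightarrow> dedge list \<Rightarrow> bool" where
  "spur_scan st [] = True"
| "spur_scan st (e # xs) =
    (if is_segment e
     then (case st of None \<Rightarrow> True | Some (s, t) \<Rightarrow> \<not> (e = flip s \<and> t = 0))
       \<and> spur_scan (Some (e, 0)) xs
     else spur_scan (map_option (\<lambda>(s, t). (s, t + turn e)) st) xs)"

lemma spur_scan_arcs:
  "\<forall>m \<in> set ms. \<not> is_segment m \<Longrightarrow>
    spur_scan (Some (s, t)) (ms @ xs) = spur_scan (Some (s, t + sum_list (map turn ms))) xs"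
  by (induction ms arbitrary: t) (auto simp: algebra_simps)

lemma spur_scan_rejects_spur:
  assumes "spur_scan st (us @ [s] @ ms @ [flip s] @ vs)" and "is_segment s"
    and "\<forall>m \<in> set ms. \<not> is_segment m" and "sum_list (map turn ms) = 0"
  shows False
  using assms(1)
proof (induction us arbitrary: st)
  case Nil
  then show ?case
    using assms(2-4) spur_scan_arcs[of ms s 0 "flip s # vs"] by simp
next
  case (Cons u us)
  then show ?case
    by (auto split: if_splits)
qed

lemma spur_scan_infix: "spur_scan None (xs @ ys @ zs) \<Longrightarrow> \<not> segment_spur ys"
  unfolding segment_spur_def using spur_scan_rejects_spur[of None "xs @ _"] by fastforce

section \<open>Lifts of cyclically reduced words\<close>

definition move :: "pt \<Rightarrow> letter \<Rightarrow> pt" where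
  "move p x = (if snd x then padd p (disp (fst x)) else psub p (disp (fst x)))"

definition letter_path :: "pt \<Rightarrow> letter \<Rightarrow> dedge list" where
  "letter_path p x = (if snd x then trans_path p (gen_path (fst x))
     else trans_path (move p x) (inv_path (gen_path (fst x))))"

lemma lift_from_Cons: "lift_from p (x # v) = letter_path p x @ lift_from (move p x) v"
  by (simp add: letter_path_def move_def)

declare lift_from.simps(2) [simp del]

lemma move_C [simp]: "move p (C, b) = p"
  by (simp add: move_def padd_def psub_def)

lemma lift_from_append: "lift_from p (u @ v) = lift_from p u @ lift_from (foldl move p u) v"
  by (induction u arbitrary: p) (simp_all add: lift_from_Cons)

lemmas lift_unfold = letter_path_def move_def trans_path_def inv_path_def flip_def padd_def psub_def
  dtail_def dhead_def

lemma letter_path_nonempty: "letter_path p x \<noteq> []"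
  by (cases x; cases "fst x") (auto simp: letter_path_def trans_path_def inv_path_def)

lemma dtail_hd_letter_path: "dtail (hd (letter_path p x)) = (p, D)"
  by (cases x; cases "fst x"; cases "snd x") (simp_all add: lift_unfold)

lemma dhead_last_letter_path: "dhead (last (letter_path p x)) = (move p x, D)"
  by (cases x; cases "fst x"; cases "snd x") (simp_all add: lift_unfold)

lemma segment_count_letter_path: "segment_count (letter_path p x) = (if fst x = C then 0 else 1)"
  by (cases x; cases "fst x"; cases "snd x") (simp_all add: lift_unfold segment_count_def is_segment_def)

lemma dhead_last_lift_from: "v \<noteq> [] \<Longrightarrow> dhead (last (lift_from p v)) = (foldl move p v, D)"
proof (induction v arbitrary: p)
  case (Cons x v)
  then show ?case
    by (cases v) (simp_all add: lift_from_Cons dhead_last_letter_path letter_path_nonempty)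
qed simp

lemma closed_lift_returns:
  assumes "closed_edge_path (lift w)"
  shows "foldl move (0, 0) w = (0, 0)"
proof (cases w)
  case (Cons x v)
  then have "dhead (last (lift w)) = dtail (hd (lift w))"
    using assms letter_path_nonempty
    unfolding closed_edge_path_def lift_def by (simp add: lift_from_Cons)
  with Cons show ?thesis
    using dhead_last_lift_from[of w "(0, 0)"]
    by (simp add: lift_def lift_from_Cons dtail_hd_letter_path letter_path_nonempty)
qed simp

lemma segment_count_lift_from: "segment_count (lift_from p v) = ell v"
  by (induction v arbitrary: p)
    (simp_all add: lift_from_Cons segment_count_letter_path ell_def segment_count_def[of "[]"])

lemma reduced_Cons:
  "reduced (x # v) \<longleftrightarrow> reduced v \<and> (v \<noteq> [] \<longrightarrow> hd v \<noteq> inv_letter x)"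
proof (cases v)
  case (Cons y v')
  have "reduced (x # y # v') \<longleftrightarrow> y \<noteq> inv_letter x \<and> reduced (y # v')"
    unfolding reduced_def
    by (auto simp: nth_Cons split: nat.splits)
  with Cons show ?thesis by auto
qed (simp add: reduced_def)

lemma reduced_append:
  assumes "reduced u" and "reduced v" and "u \<noteq> [] \<Longrightarrow> v \<noteq> [] \<Longrightarrow> hd v \<noteq> inv_letter (last u)"
  shows "reduced (u @ v)"
  using assms by (induction u rule: induct_list012) (auto simp: reduced_Cons)

text \<open>The path of a letter \<open>a\<^sup>\<plusminus>\<^sup>1\<close> or \<open>b\<^sup>\<plusminus>\<^sup>1\<close> consists of arcs of total turning
  \<open>turns_before\<close>, the segment \<open>letter_segment\<close> and arcs of total turning \<open>turns_after\<close>.\<close>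
fun letter_segment :: "pt \<Rightarrow> letter \<Rightarrow> dedge" where
  "letter_segment p (A, True) = (VSeg p, True)"
| "letter_segment p (A, False) = (VSeg (psub p (0, 1)), False)"
| "letter_segment p (B, True) = (HSeg p, True)"
| "letter_segment p (B, False) = (HSeg (psub p (1, 0)), False)"
| "letter_segment p (C, _) = undefined"

fun turns_before :: "letter \<Rightarrow> int" where
  "turns_before (A, True) = -2"
| "turns_before (A, False) = 0"
| "turns_before (B, True) = 1"
| "turns_before (B, False) = -1"
| "turns_before (C, _) = undefined"

fun turns_after :: "letter \<Rightarrow> int" where
  "turns_after (A, True) = 0"
| "turns_after (A, False) = 2"
| "turns_after (B, True) = 1"
| "turns_after (B, False) = -1"
| "turns_after (C, _) = undefined"

lemma spur_scan_letter_path_C: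
  "spur_scan st (letter_path p (C, b) @ xs) =
    spur_scan (map_option (\<lambda>(s, t). (s, t + (if b then 4 else -4))) st) xs"
  by (cases st; cases b) (auto simp: lift_unfold is_segment_def turn_def add.commute)

lemma spur_scan_letter_path:
  assumes "fst x \<noteq> C"
  shows "spur_scan st (letter_path p x @ xs) =
    ((case st of None \<Rightarrow> True | Some (s, t) \<Rightarrow> \<not> (letter_segment p x = flip s \<and> t + turns_before x = 0))
     \<and> spur_scan (Some (letter_segment p x, turns_after x)) xs)"
  using assms
  by (cases x; cases "fst x"; cases "snd x"; cases st) (auto simp: lift_unfold is_segment_def turn_def)

lemma letter_segment_eq_flip:
  assumes "fst x \<noteq> C" and "fst y \<noteq> C" and "letter_segment (move q y) x = flip (letter_segment q y)"
  shows "x = inv_letter y \<and> turns_after y + turns_before x = 0"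
  using assms
  by (cases x; cases y; cases "fst x"; cases "snd x"; cases "fst y"; cases "snd y")
    (auto simp: lift_unfold inv_letter_def)

text \<open>The state of \<open>spur_scan\<close> after the path of a letter \<open>y\<close> read from \<open>q\<close>, followed by
  \<open>c\<^sup>k\<close>. Since the word is reduced, \<open>k\<close> never returns to 0 once it is nonzero; so a spur could
  only be closed by the segment of \<open>y\<^sup>-\<^sup>1\<close> read directly after \<open>y\<close>, which reducedness excludes.\<close>
definition lift_scan_invariant :: "(dedge \<times> int) option \<Rightarrow> pt \<Rightarrow> letter list \<Rightarrow> bool" where
  "lift_scan_invariant st p v \<longleftrightarrow> st = None \<or>
     (\<exists>y q k. fst y \<noteq> C \<and> p = move q y \<and> st = Some (letter_segment q y, turns_after y + 4 * k) \<and>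
       (v \<noteq> [] \<longrightarrow> (k = 0 \<longrightarrow> hd v \<noteq> inv_letter y) \<and>
         (0 < k \<longrightarrow> hd v \<noteq> (C, False)) \<and> (k < 0 \<longrightarrow> hd v \<noteq> (C, True))))"

lemma lift_scan_invariant_C:
  assumes "reduced ((C, b) # v)" and "lift_scan_invariant st p ((C, b) # v)"
  shows "lift_scan_invariant (map_option (\<lambda>(s, t). (s, t + (if b then 4 else -4))) st) p v"
proof (cases st)
  case (Some st')
  then obtain y q k where y: "fst y \<noteq> C" "p = move q y"
    "st = Some (letter_segment q y, turns_after y + 4 * k)"
    and k: "0 < k \<longrightarrow> b" "k < 0 \<longrightarrow> \<not> b"
    using assms(2) unfolding lift_scan_invariant_def by auto
  have next_letter: "v \<noteq> [] \<Longrightarrow> hd v \<noteq> (C, \<not> b)"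
    using assms(1) by (simp add: reduced_Cons inv_letter_def)
  show ?thesis
  proof (cases b)
    case True
    with k have "0 \<le> k" by force
    then show ?thesis
      unfolding lift_scan_invariant_def using y next_letter True
      by (intro disjI2 exI[of _ y] exI[of _ q] exI[of _ "k + 1"]) (auto simp: algebra_simps)
  next
    case False
    with k have "k \<le> 0" by force
    then show ?thesis
      unfolding lift_scan_invariant_def using y next_letter False
      by (intro disjI2 exI[of _ y] exI[of _ q] exI[of _ "k - 1"]) (auto simp: algebra_simps)
  qed
qed (simp add: lift_scan_invariant_def)

lemma lift_scan_invariant_letter:
  assumes "fst x \<noteq> C" and "reduced (x # v)" and "lift_scan_invariant st p (x # v)"
  shows "(case st of None \<Rightarrow> True
      | Some (s, t) \<Rightarrow> \<not> (letter_segment p x = flip s \<and> t + turns_before x = 0))"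
    and "lift_scan_invariant (Some (letter_segment p x, turns_after x)) (move p x) v"
proof -
  show "lift_scan_invariant (Some (letter_segment p x, turns_after x)) (move p x) v"
    unfolding lift_scan_invariant_def using assms(1,2)
    by (intro disjI2 exI[of _ x] exI[of _ p] exI[of _ 0]) (auto simp: reduced_Cons)
  show "case st of None \<Rightarrow> True
      | Some (s, t) \<Rightarrow> \<not> (letter_segment p x = flip s \<and> t + turns_before x = 0)"
  proof (cases st)
    case (Some st')
    then obtain y q k where y: "fst y \<noteq> C" "p = move q y"
      "st = Some (letter_segment q y, turns_after y + 4 * k)" and "k = 0 \<longrightarrow> x \<noteq> inv_letter y"
      using assms(3) unfolding lift_scan_invariant_def by auto
    with assms(1) show ?thesis
      using letter_segment_eq_flip by fastforce
  qed simp
qed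

lemma spur_scan_lift_from:
  "reduced v \<Longrightarrow> lift_scan_invariant st p v \<Longrightarrow> spur_scan st (lift_from p v)"
proof (induction v arbitrary: st p)
  case (Cons x v)
  have "reduced v"
    using Cons.prems(1) reduced_Cons by blast
  show ?case
  proof (cases "fst x = C")
    case True
    then obtain b where x: "x = (C, b)"
      by (cases x) auto
    have "lift_scan_invariant (map_option (\<lambda>(s, t). (s, t + (if b then 4 else -4))) st) p v"
      using lift_scan_invariant_C Cons.prems unfolding x .
    then show ?thesis
      unfolding x lift_from_Cons move_C spur_scan_letter_path_C
      by (rule Cons.IH[OF \<open>reduced v\<close>])
  next
    case False
    with Cons \<open>reduced v\<close> show ?thesis
      by (simp add: lift_from_Cons spur_scan_letter_path lift_scan_invariant_letter)
  qed
qed simp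

lemma lift_cyclically_spur_free:
  assumes "cyc_reduced w" and "closed_edge_path (lift w)"
  shows "cyclically_spur_free (lift w)"
proof -
  have "lift w @ lift w = lift_from (0, 0) (w @ w)"
    using closed_lift_returns[OF assms(2)] by (simp add: lift_def lift_from_append)
  moreover have "reduced (w @ w)"
    using assms(1) reduced_append unfolding cyc_reduced_def by metis
  ultimately have scan: "spur_scan None (lift w @ lift w)"
    using spur_scan_lift_from by (simp add: lift_scan_invariant_def)
  show ?thesis
    unfolding cyclically_spur_free_def
  proof
    fix k
    define m where "m = k mod length (lift w)"
    have "lift w @ lift w = take m (lift w) @ (drop m (lift w) @ take m (lift w)) @ drop m (lift w)"
      by simp
    then show "\<not> segment_spur (rotate k (lift w))"
      using scan spur_scan_infix unfolding m_def rotate_drop_take by metis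
  qed
qed

theorem lemma2p2:
  fixes eps :: real and w :: "letter list" and \<gamma> :: "dedge list"
  assumes "0 < eps" and "eps < 0.1"
    and "w \<in> N" and "cyc_reduced w"
    and "closed_edge_path \<gamma>" and "geom_irreducible \<gamma>"
    and "freely_homotopic \<gamma> (lift w)"
  shows "real (ell w) \<le> inverse (1 - 2 * eps) * path_len eps \<gamma>"
proof -
  have closed: "closed_edge_path (lift w)"
    and homotopy: "(\<lambda>x y. fh_step x y \<or> fh_step y x)\<^sup>*\<^sup>* \<gamma> (lift w)"
    using assms(7) unfolding freely_homotopic_def by auto
  obtain n where n: "edge_path.cancel_step\<^sup>*\<^sup>* (lift w) n" "rotation_equiv n \<gamma>"
    using free_homotopy_cyclic_normal_form[OF homotopy geom_irreducible_cyclically_reduced[OF assms(6)]]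
    by blast
  have "segment_count \<gamma> = segment_count n"
    using segment_count_rotation_equiv[OF n(2)] .
  also have "\<dots> = segment_count (lift w)"
    using cancel_steps_cyclically_spur_free[OF n(1) lift_cyclically_spur_free[OF assms(4) closed]]
    by simp
  also have "\<dots> = ell w"
    unfolding lift_def by (rule segment_count_lift_from)
  finally have "(1 - 2 * eps) * real (ell w) \<le> path_len eps \<gamma>"
    using path_len_ge_segment_count[OF assms(1)] by metis
  moreover have "0 < 1 - 2 * eps"
    using assms(2) by simp
  ultimately show ?thesis
    by (simp add: field_simps)
qed

end
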